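(* Let $k$ be a field of characteristic $0$ containing a primitive fifth root of unity. For $\underline{a}=(a_1,\ldots,a_7)\in k^7$ let $$F_{\underline{a}}=a_1x_0^3 + a_2x_0x_1x_4 + a_3x_0x_2x_3 + a_4x_1^2x_3 + a_5x_1x_2^2 + a_6x_2x_4^2+a_7x_3^2x_4 .$$ Define $$\begin{aligned}\Delta(\underline{a}):=\;& a^4_2 a^5_3 a_4 a_6 + 8 a_1 a^2_2 a^4_3 a^2_4 a^2_6 + 16 a^2_1 a^3_3 a^3_4 a^3_6 + a^5_2 a^4_3 a_5 a_7 + 15 a_1 a^3_2 a^3_3 a_4 a_5 a_6 a_7\\ &+ 12 a^2_1 a_2 a^2_3 a^2_4 a_5 a^2_6 a_7 + 8 a_1 a^4_2 a^2_3 a^2_5 a^2_7 + 12 a^2_1 a^2_2 a_3 a_4 a^2_5 a_6 a^2_7 + 27 a^3_1 a^2_4 a^2_5 a^2_6 a^2_7 + 16 a^2_1 a^3_2 a^3_5 a^3_7\end{aligned}$$ and $D(\underline{a})=a_1a_4a_5a_6a_7\,\Delta(\underline{a})$. Then the equation $F_{\underline{a}}=0$ defines a smooth cubic threefold in $\mathbb{P}^4$ if and only if $D(\underline{a})\neq 0$.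
   Context: $(x_0:\ldots:x_4)$ are homogeneous coordinates on $\mathbb{P}^4$. *)

theory Defs
  imports "HOL-Algebra.Algebraic_Closure_Type"
begin

definition cubicF :: "(nat \<Rightarrow> 'b::comm_ring_1) \<Rightarrow> (nat \<Rightarrow> 'b) \<Rightarrow> 'b" where
  "cubicF c x =
     c 1 * x 0 ^ 3 + c 2 * x 0 * x 1 * x 4 + c 3 * x 0 * x 2 * x 3 + c 4 * x 1 ^ 2 * x 3
   + c 5 * x 1 * x 2 ^ 2 + c 6 * x 2 * x 4 ^ 2 + c 7 * x 3 ^ 2 * x 4"

text \<open>Formal partial derivative of F with respect to x_i at the point x:
  the coefficient of t in the polynomial F(x + t e_i).\<close>
definition cubicF_partial :: "(nat \<Rightarrow> 'b::comm_ring_1) \<Rightarrow> nat \<Rightarrow> (nat \<Rightarrow> 'b) \<Rightarrow> 'b" where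
  "cubicF_partial c i x =
     coeff (cubicF (\<lambda>j. [:c j:]) (\<lambda>j. if j = i then [:x j, 1:] else [:x j:])) 1"

definition smooth_cubic :: "(nat \<Rightarrow> 'a::field) \<Rightarrow> bool" where
  "smooth_cubic a \<longleftrightarrow>
     \<not> (\<exists>x :: nat \<Rightarrow> 'a alg_closure. (\<exists>i<5. x i \<noteq> 0) \<and>
          cubicF (\<lambda>j. to_ac (a j)) x = 0 \<and>
          (\<forall>i<5. cubicF_partial (\<lambda>j. to_ac (a j)) i x = 0))"

definition Delta7 :: "(nat \<Rightarrow> 'a::comm_ring_1) \<Rightarrow> 'a" where
  "Delta7 a =
     a 2^4 * a 3^5 * a 4 * a 6 + 8 * a 1 * a 2^2 * a 3^4 * a 4^2 * a 6^2
   + 16 * a 1^2 * a 3^3 * a 4^3 * a 6^3 + a 2^5 * a 3^4 * a 5 * a 7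
   + 15 * a 1 * a 2^3 * a 3^3 * a 4 * a 5 * a 6 * a 7
   + 12 * a 1^2 * a 2 * a 3^2 * a 4^2 * a 5 * a 6^2 * a 7
   + 8 * a 1 * a 2^4 * a 3^2 * a 5^2 * a 7^2
   + 12 * a 1^2 * a 2^2 * a 3 * a 4 * a 5^2 * a 6 * a 7^2
   + 27 * a 1^3 * a 4^2 * a 5^2 * a 6^2 * a 7^2
   + 16 * a 1^2 * a 2^3 * a 5^3 * a 7^3"

definition D7 :: "(nat \<Rightarrow> 'a::comm_ring_1) \<Rightarrow> 'a" where
  "D7 a = a 1 * a 4 * a 5 * a 6 * a 7 * Delta7 a"

end

theory Submission
  imports Defs
begin

text \<open>
  A singular point of \<open>F\<^sub>a\<close> is a coordinate point exactly when one of
  \<open>a\<^sub>1, a\<^sub>4, a\<^sub>5, a\<^sub>6, a\<^sub>7\<close> vanishes; otherwise all its coordinates are nonzero.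
  In that case the Euler relations \<open>x\<^sub>i \<partial>\<^sub>iF = 0\<close> are five linear equations in the seven
  monomials of \<open>F\<^sub>a\<close>, whose solutions are parametrised by two values \<open>A, B\<close>, and the
  monomials obey two multiplicative relations. Conversely, values satisfying these relations
  are attained by a point of the torus (after extracting a fifth root). Eliminating the
  monomials, \<open>(A : B)\<close> is a common zero of two binary cubics whose resultant is
  \<open>a\<^sub>2 a\<^sub>3\<^sup>2 a\<^sub>5\<^sup>2 a\<^sub>7\<^sup>2 \<Delta>\<close>; the degenerate cases \<open>a\<^sub>2 = 0\<close> and \<open>a\<^sub>3 = 0\<close> are solved directly.
\<close>

lemma cubicF_partial_simps:
  fixes c x :: "nat \<Rightarrow> 'a::comm_ring_1"
  shows "cubicF_partial c 0 x = 3 * c 1 * x 0 ^ 2 + c 2 * x 1 * x 4 + c 3 * x 2 * x 3"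
    and "cubicF_partial c 1 x = c 2 * x 0 * x 4 + 2 * c 4 * x 1 * x 3 + c 5 * x 2 ^ 2"
    and "cubicF_partial c 2 x = c 3 * x 0 * x 3 + 2 * c 5 * x 1 * x 2 + c 6 * x 4 ^ 2"
    and "cubicF_partial c 3 x = c 3 * x 0 * x 2 + c 4 * x 1 ^ 2 + 2 * c 7 * x 3 * x 4"
    and "cubicF_partial c 4 x = c 2 * x 0 * x 1 + 2 * c 6 * x 2 * x 4 + c 7 * x 3 ^ 2"
  unfolding cubicF_partial_def cubicF_def
  by (simp_all add: algebra_simps power2_eq_square power3_eq_cube)

lemma less_5_cases: "(i::nat) < 5 \<longleftrightarrow> i = 0 \<or> i = 1 \<or> i = 2 \<or> i = 3 \<or> i = 4"
  by auto

lemma ex_less_5: "(\<exists>i<5::nat. P i) \<longleftrightarrow> P 0 \<or> P 1 \<or> P 2 \<or> P 3 \<or> P 4"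
  by (auto simp: less_Suc_eq numeral_eq_Suc)

lemma all_less_5: "(\<forall>i<5::nat. P i) \<longleftrightarrow> P 0 \<and> P 1 \<and> P 2 \<and> P 3 \<and> P 4"
  by (auto simp: less_Suc_eq numeral_eq_Suc)

lemma sum_less_5: "(\<Sum>i<5::nat. f i) = f 0 + f 1 + f 2 + f 3 + f 4"
  by (simp add: eval_nat_numeral)

lemma cubicF_partials_eq_0_iff:
  fixes c x :: "nat \<Rightarrow> 'a::comm_ring_1"
  shows "(\<forall>i<5. cubicF_partial c i x = 0) \<longleftrightarrow>
     3 * c 1 * x 0 ^ 2 + c 2 * x 1 * x 4 + c 3 * x 2 * x 3 = 0 \<and>
     c 2 * x 0 * x 4 + 2 * c 4 * x 1 * x 3 + c 5 * x 2 ^ 2 = 0 \<and>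
     c 3 * x 0 * x 3 + 2 * c 5 * x 1 * x 2 + c 6 * x 4 ^ 2 = 0 \<and>
     c 3 * x 0 * x 2 + c 4 * x 1 ^ 2 + 2 * c 7 * x 3 * x 4 = 0 \<and>
     c 2 * x 0 * x 1 + 2 * c 6 * x 2 * x 4 + c 7 * x 3 ^ 2 = 0"
  unfolding all_less_5 cubicF_partial_simps ..

lemma cubicF_scaled_partials:
  fixes c x :: "nat \<Rightarrow> 'a::comm_ring_1"
  shows "x 0 * cubicF_partial c 0 x = 3 * (c 1 * x 0^3) + c 2 * x 0 * x 1 * x 4 + c 3 * x 0 * x 2 * x 3"
    and "x 1 * cubicF_partial c 1 x = c 2 * x 0 * x 1 * x 4 + 2 * (c 4 * x 1^2 * x 3) + c 5 * x 1 * x 2^2"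
    and "x 2 * cubicF_partial c 2 x = c 3 * x 0 * x 2 * x 3 + 2 * (c 5 * x 1 * x 2^2) + c 6 * x 2 * x 4^2"
    and "x 3 * cubicF_partial c 3 x = c 3 * x 0 * x 2 * x 3 + c 4 * x 1^2 * x 3 + 2 * (c 7 * x 3^2 * x 4)"
    and "x 4 * cubicF_partial c 4 x = c 2 * x 0 * x 1 * x 4 + 2 * (c 6 * x 2 * x 4^2) + c 7 * x 3^2 * x 4"
  unfolding cubicF_partial_simps by (simp_all add: algebra_simps power2_eq_square power3_eq_cube)

lemma cubicF_euler:
  fixes c x :: "nat \<Rightarrow> 'a::idom"
  shows "(\<Sum>i<5. x i * cubicF_partial c i x) = 3 * cubicF c x"
  unfolding sum_less_5 cubicF_partial_simps cubicF_def by Groebner_Basis.algebra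

definition singular_point :: "(nat \<Rightarrow> 'a::comm_ring_1) \<Rightarrow> (nat \<Rightarrow> 'a) \<Rightarrow> bool" where
  "singular_point c x \<longleftrightarrow>
     (\<exists>i<5. x i \<noteq> 0) \<and> cubicF c x = 0 \<and> (\<forall>i<5. cubicF_partial c i x = 0)"

lemma singular_point_iff_partials:
  fixes c x :: "nat \<Rightarrow> 'a::field_char_0"
  shows "singular_point c x \<longleftrightarrow> (\<exists>i<5. x i \<noteq> 0) \<and> (\<forall>i<5. cubicF_partial c i x = 0)"
  using cubicF_euler[of x c] by (auto simp: singular_point_def)

lemma coordinate_singular_point:
  fixes c :: "nat \<Rightarrow> 'a::field_char_0"
  assumes "c 1 * c 4 * c 5 * c 6 * c 7 = 0"
  shows "\<exists>x. singular_point c x"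
proof -
  have "\<exists>j\<in>{0,1,2,4,3}. singular_point c (\<lambda>i. if i = j then 1 else 0)"
    using assms unfolding singular_point_iff_partials ex_less_5 cubicF_partials_eq_0_iff
    by auto
  then show ?thesis by blast
qed

lemma partials_eq_0_imp_monomial_relations:
  fixes c x :: "nat \<Rightarrow> 'a::field_char_0"
  assumes "\<forall>i<5. cubicF_partial c i x = 0"
  defines "A \<equiv> c 4 * x 1^2 * x 3" and "B \<equiv> c 5 * x 1 * x 2^2"
  shows "c 6 * x 2 * x 4^2 = A" "c 7 * x 3^2 * x 4 = B"
    and "c 2 * x 0 * x 1 * x 4 = -(2*A + B)" "c 3 * x 0 * x 2 * x 3 = -(A + 2*B)"
    and "c 1 * x 0^3 = A + B"
proof -
  from assms(1) have e0: "3 * (c 1 * x 0^3) + c 2 * x 0 * x 1 * x 4 + c 3 * x 0 * x 2 * x 3 = 0"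
    and e1: "c 2 * x 0 * x 1 * x 4 + 2 * A + B = 0"
    and e2: "c 3 * x 0 * x 2 * x 3 + 2 * B + c 6 * x 2 * x 4^2 = 0"
    and e3: "c 3 * x 0 * x 2 * x 3 + A + 2 * (c 7 * x 3^2 * x 4) = 0"
    and e4: "c 2 * x 0 * x 1 * x 4 + 2 * (c 6 * x 2 * x 4^2) + c 7 * x 3^2 * x 4 = 0"
    unfolding A_def B_def cubicF_partials_eq_0_iff by Groebner_Basis.algebra+
  have "5 * (c 6 * x 2 * x 4^2 - A) = 0" using e1 e2 e3 e4 by Groebner_Basis.algebra
  then show m6: "c 6 * x 2 * x 4^2 = A" by simp
  have "5 * (c 7 * x 3^2 * x 4 - B) = 0" using e1 e2 e3 e4 by Groebner_Basis.algebra
  then show "c 7 * x 3^2 * x 4 = B" by simp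
  show m2: "c 2 * x 0 * x 1 * x 4 = -(2*A + B)" using e1 by Groebner_Basis.algebra
  show m3: "c 3 * x 0 * x 2 * x 3 = -(A + 2*B)" using e2 m6 by Groebner_Basis.algebra
  have "3 * (c 1 * x 0^3 - (A + B)) = 0" using e0 m2 m3 by Groebner_Basis.algebra
  then have "c 1 * x 0^3 - (A + B) = 0" by (metis mult_eq_0_iff zero_neq_numeral)
  then show "c 1 * x 0^3 = A + B" by simp
qed

lemma singular_point_coordinates_nonzero:
  fixes c x :: "nat \<Rightarrow> 'a::field_char_0"
  assumes c: "c 1 \<noteq> 0" "c 4 \<noteq> 0" "c 5 \<noteq> 0" "c 6 \<noteq> 0" "c 7 \<noteq> 0"
    and sing: "singular_point c x"
  shows "x 0 \<noteq> 0 \<and> x 1 \<noteq> 0 \<and> x 2 \<noteq> 0 \<and> x 3 \<noteq> 0 \<and> x 4 \<noteq> 0"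
proof -
  have partials: "\<forall>i<5. cubicF_partial c i x = 0" and nonzero: "\<exists>i<5. x i \<noteq> 0"
    using sing by (simp_all add: singular_point_iff_partials)
  define A where "A = c 4 * x 1^2 * x 3"
  define B where "B = c 5 * x 1 * x 2^2"
  note m = partials_eq_0_imp_monomial_relations[OF partials, folded A_def B_def]
  have AB_zero: "A = 0 \<and> B = 0 \<longleftrightarrow> x 0 = 0"
  proof
    show "x 0 = 0" if "A = 0 \<and> B = 0" using that m(5) c(1) by simp
    show "A = 0 \<and> B = 0" if "x 0 = 0" using that m(3,5) by simp Groebner_Basis.algebra
  qed
  have x0: "x 0 \<noteq> 0"
  proof
    assume x0: "x 0 = 0"
    then have A: "c 4 * x 1^2 * x 3 = 0" and B: "c 5 * x 1 * x 2^2 = 0"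
      using AB_zero by (simp_all add: A_def B_def)
    have p: "2 * c 4 * x 1 * x 3 + c 5 * x 2^2 = 0" "2 * c 5 * x 1 * x 2 + c 6 * x 4^2 = 0"
      "c 4 * x 1^2 + 2 * c 7 * x 3 * x 4 = 0" "2 * c 6 * x 2 * x 4 + c 7 * x 3^2 = 0"
      using partials x0 unfolding cubicF_partials_eq_0_iff by simp_all
    have "x 1 = 0" using A B p(3) c by auto
    then have "x 2 = 0" using p(1) c by simp
    then have "x 4 = 0" using p(2) c by simp
    have "x 3 = 0" using p(4) \<open>x 2 = 0\<close> c by simp
    show False
      using nonzero x0 \<open>x 1 = 0\<close> \<open>x 2 = 0\<close> \<open>x 3 = 0\<close> \<open>x 4 = 0\<close> by (simp add: ex_less_5)
  qed
  have "x i \<noteq> 0" if "i \<in> {1,2,3,4}" for i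
  proof
    assume "x i = 0"
    with that have "A = 0 \<and> B = 0" using m(1,2) by (auto simp: A_def B_def)
    with x0 AB_zero show False by simp
  qed
  with x0 show ?thesis by simp
qed

text \<open>
  At a singular point with nonzero coordinates, \<open>A = a\<^sub>4x\<^sub>1\<^sup>2x\<^sub>3 = a\<^sub>6x\<^sub>2x\<^sub>4\<^sup>2\<close>,
  \<open>B = a\<^sub>5x\<^sub>1x\<^sub>2\<^sup>2 = a\<^sub>7x\<^sub>3\<^sup>2x\<^sub>4\<close>, \<open>y = x\<^sub>0x\<^sub>1x\<^sub>4\<close>, \<open>z = x\<^sub>0x\<^sub>2x\<^sub>3\<close>; the last two equations
  are the multiplicative relations among the monomials.
\<close>
definition torus_solution :: "(nat \<Rightarrow> 'a::field) \<Rightarrow> 'a \<Rightarrow> 'a \<Rightarrow> 'a \<Rightarrow> 'a \<Rightarrow> bool" where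
  "torus_solution c A B y z \<longleftrightarrow>
     A \<noteq> 0 \<and> B \<noteq> 0 \<and> y \<noteq> 0 \<and> z \<noteq> 0 \<and>
     c 2 * y = -(2*A + B) \<and> c 3 * z = -(A + 2*B) \<and>
     c 5 * c 7 * A^2 * z = c 4 * c 6 * B^2 * y \<and> c 1 * c 5 * c 7 * y * z^2 = (A + B) * B^2"

lemma singular_point_imp_torus_solution:
  fixes c x :: "nat \<Rightarrow> 'a::field_char_0"
  assumes c: "c 1 \<noteq> 0" "c 4 \<noteq> 0" "c 5 \<noteq> 0" "c 6 \<noteq> 0" "c 7 \<noteq> 0"
    and sing: "singular_point c x"
  shows "torus_solution c (c 4 * x 1^2 * x 3) (c 5 * x 1 * x 2^2) (x 0 * x 1 * x 4) (x 0 * x 2 * x 3)"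
proof -
  have x: "x 0 \<noteq> 0" "x 1 \<noteq> 0" "x 2 \<noteq> 0" "x 3 \<noteq> 0" "x 4 \<noteq> 0"
    using singular_point_coordinates_nonzero[OF c sing] by simp_all
  have "\<forall>i<5. cubicF_partial c i x = 0"
    using sing by (simp add: singular_point_iff_partials)
  note m = partials_eq_0_imp_monomial_relations[OF this]
  show ?thesis
    unfolding torus_solution_def
  proof (intro conjI)
    show "c 5 * c 7 * (c 4 * x 1^2 * x 3)^2 * (x 0 * x 2 * x 3)
        = c 4 * c 6 * (c 5 * x 1 * x 2^2)^2 * (x 0 * x 1 * x 4)"
      using m(1,2) by Groebner_Basis.algebra
    show "c 1 * c 5 * c 7 * (x 0 * x 1 * x 4) * (x 0 * x 2 * x 3)^2
        = (c 4 * x 1^2 * x 3 + c 5 * x 1 * x 2^2) * (c 5 * x 1 * x 2^2)^2"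
      using m(2,5) by Groebner_Basis.algebra
  qed (use m(3,4) x c in \<open>simp_all add: mult.assoc\<close>)
qed

lemma monomials_imp_singular_point:
  fixes c x :: "nat \<Rightarrow> 'a::field_char_0"
  assumes x: "x 0 \<noteq> 0" "x 1 \<noteq> 0" "x 2 \<noteq> 0" "x 3 \<noteq> 0" "x 4 \<noteq> 0"
    and m: "c 4 * x 1^2 * x 3 = A" "c 6 * x 2 * x 4^2 = A" "c 5 * x 1 * x 2^2 = B" "c 7 * x 3^2 * x 4 = B"
      "c 2 * x 0 * x 1 * x 4 = -(2*A + B)" "c 3 * x 0 * x 2 * x 3 = -(A + 2*B)" "c 1 * x 0^3 = A + B"
  shows "singular_point c x"
proof -
  have nonzero: "x i \<noteq> 0" if "i < 5" for i
    using that x by (auto simp: less_5_cases)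
  have "x i * cubicF_partial c i x = 0" if "i < 5" for i
    using that unfolding less_5_cases
    by (auto simp only: cubicF_scaled_partials m) (simp_all add: algebra_simps)
  with nonzero show ?thesis
    unfolding singular_point_iff_partials by (meson mult_eq_0_iff zero_less_numeral)
qed

lemma torus_solution_scale:
  assumes "torus_solution c A B y z" and "k \<noteq> 0"
  shows "torus_solution c (k*A) (k*B) (k*y) (k*z)"
proof -
  have e: "c 2 * y = -(2*A + B)" "c 3 * z = -(A + 2*B)"
    "c 5 * c 7 * A^2 * z = c 4 * c 6 * B^2 * y" "c 1 * c 5 * c 7 * y * z^2 = (A + B) * B^2"
    using assms(1) by (simp_all add: torus_solution_def)
  have "c 2 * (k*y) = -(2*(k*A) + k*B)" "c 3 * (k*z) = -(k*A + 2*(k*B))"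
    "c 5 * c 7 * (k*A)^2 * (k*z) = c 4 * c 6 * (k*B)^2 * (k*y)"
    "c 1 * c 5 * c 7 * (k*y) * (k*z)^2 = (k*A + k*B) * (k*B)^2"
    using e by Groebner_Basis.algebra+
  with assms show ?thesis by (simp add: torus_solution_def)
qed

lemma alg_closed_monomials_attain:
  fixes a b y z :: "'a::alg_closed_field"
  assumes "a \<noteq> 0" "b \<noteq> 0" "z \<noteq> 0"
  obtains x1 x2 x3 x4 where "x1^2 * x3 = a" "x1 * x2^2 = b" "x1 * x4 = y" "x2 * x3 = z"
proof -
  obtain u where u: "u^5 = b * a^2 / z^2" using nth_root_exists[of 5] by auto
  then have "u \<noteq> 0" using assms by auto
  show thesis
  proof (rule that[of u "a / u^2" "u^2 * z / a" "y / u"])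
    have "u * (u^2 * z / a)^2 = u^5 * z^2 / a^2"
      using assms by (simp add: field_simps eval_nat_numeral)
    then show "u * (u^2 * z / a)^2 = b" unfolding u using assms by (simp add: field_simps)
  qed (use \<open>u \<noteq> 0\<close> assms in \<open>simp_all add: field_simps\<close>)
qed

lemma normalized_torus_solution_imp_singular_point:
  fixes c :: "nat \<Rightarrow> 'a::{alg_closed_field,field_char_0}"
  assumes c1: "c 1 \<noteq> 0" and c4: "c 4 \<noteq> 0" and c5: "c 5 \<noteq> 0"
    and sol: "torus_solution c A B y z" and normalized: "A + B = c 1"
  shows "\<exists>x. singular_point c x"
proof -
  have A: "A \<noteq> 0" and B: "B \<noteq> 0" and y: "y \<noteq> 0" and z: "z \<noteq> 0"
    and l2: "c 2 * y = -(2*A + B)" and l3: "c 3 * z = -(A + 2*B)"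
    and r1: "c 5 * c 7 * A^2 * z = c 4 * c 6 * B^2 * y"
    and "c 1 * c 5 * c 7 * y * z^2 = (A + B) * B^2"
    using sol by (simp_all add: torus_solution_def)
  then have "c 1 * (c 5 * c 7 * y * z^2 - B^2) = 0" unfolding normalized by Groebner_Basis.algebra
  then have r2: "c 5 * c 7 * y * z^2 = B^2" using c1 by simp
  have "A / c 4 \<noteq> 0" "B / c 5 \<noteq> 0" using A B c4 c5 by simp_all
  then obtain x1 x2 x3 x4 where m: "x1^2 * x3 = A / c 4" "x1 * x2^2 = B / c 5" "x1 * x4 = y" "x2 * x3 = z"
    using alg_closed_monomials_attain z by metis
  have x: "x1 \<noteq> 0" "x2 \<noteq> 0" "x3 \<noteq> 0" "x4 \<noteq> 0" using m y z by auto
  have m4: "c 4 * x1^2 * x3 = A" and m5: "c 5 * x1 * x2^2 = B" using m(1,2) c4 c5 by (simp_all add: mult.assoc)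
  have "c 6 * x2 * x4^2 * A = A^2"
  proof -
    have "A^2 * B^2 = c 4 * c 6 * y^2 * z * B^2" using r1 r2 by Groebner_Basis.algebra
    then have "A^2 = c 4 * c 6 * y^2 * z" using B by simp
    then show ?thesis using m(3,4) m4 by Groebner_Basis.algebra
  qed
  then have m6: "c 6 * x2 * x4^2 = A" using A by (simp add: power2_eq_square)
  have "c 7 * x3^2 * x4 * B = B^2" using r2 m(3,4) m5 by Groebner_Basis.algebra
  then have m7: "c 7 * x3^2 * x4 = B" using B by (simp add: power2_eq_square)
  define x :: "nat \<Rightarrow> 'a" where "x i = [1, x1, x2, x3, x4] ! i" for i
  have "singular_point c x"
  proof (rule monomials_imp_singular_point)
    show "x 0 \<noteq> 0" "x 1 \<noteq> 0" "x 2 \<noteq> 0" "x 3 \<noteq> 0" "x 4 \<noteq> 0"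
      using x by (simp_all add: x_def)
  qed (use m4 m5 m6 m7 l2 l3 m(3,4) normalized[symmetric] in \<open>simp_all add: x_def mult.assoc\<close>)
  then show ?thesis by blast
qed

lemma torus_solution_imp_singular_point:
  fixes c :: "nat \<Rightarrow> 'a::{alg_closed_field,field_char_0}"
  assumes c: "c 1 \<noteq> 0" "c 4 \<noteq> 0" "c 5 \<noteq> 0" "c 7 \<noteq> 0"
    and sol: "torus_solution c A B y z"
  shows "\<exists>x. singular_point c x"
proof -
  have eq: "c 1 * c 5 * c 7 * y * z^2 = (A + B) * B^2" and "y \<noteq> 0" "z \<noteq> 0"
    using sol by (simp_all add: torus_solution_def)
  then have "(A + B) * B^2 \<noteq> 0" using c unfolding eq[symmetric] by simp
  then have AB: "A + B \<noteq> 0" by simp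
  define k where "k = c 1 / (A + B)"
  have "k \<noteq> 0" using AB c(1) by (simp add: k_def)
  moreover have "k*A + k*B = c 1" unfolding distrib_left[symmetric] k_def using AB by simp
  ultimately show ?thesis
    using normalized_torus_solution_imp_singular_point[OF c(1,2,3) torus_solution_scale[OF sol]] by blast
qed

lemma alg_closed_cubic_vieta:
  fixes b c d :: "'a::alg_closed_field"
  obtains r1 r2 r3 where "r1 + r2 + r3 = -b" "r1*r2 + r1*r3 + r2*r3 = c" "r1*r2*r3 = -d"
proof -
  obtain r1 where r1: "poly [:d, c, b, 1:] r1 = 0"
    using alg_closed_imp_poly_has_root[of "[:d, c, b, 1:]"] by auto
  obtain r2 where r2: "poly [:c + b*r1 + r1^2, b + r1, 1:] r2 = 0"
    using alg_closed_imp_poly_has_root[of "[:c + b*r1 + r1^2, b + r1, 1:]"] by auto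
  define r3 where "r3 = -b - r1 - r2"
  have root1: "d + r1 * (c + r1 * (b + r1)) = 0" using r1 by simp
  have root2: "c + b*r1 + r1^2 + r2 * (b + r1 + r2) = 0" using r2 by simp
  have "r1 + r2 + r3 = -b" by (simp add: r3_def)
  moreover have "r1*r2 + r1*r3 + r2*r3 = c"
    using root2 unfolding r3_def by Groebner_Basis.algebra
  moreover have "r1*r2*r3 = -d"
    using root1 root2 unfolding r3_def by Groebner_Basis.algebra
  ultimately show thesis ..
qed

text \<open>Up to sign, the resultant of \<open>p t\<^sup>3 + 2p t\<^sup>2 - 2q t - q\<close> and
  \<open>\<alpha>(2t+1)(t+2)\<^sup>2 + \<beta>(t+1)\<close>.\<close>
definition cubic_pair_resultant :: "'a::comm_ring_1 \<Rightarrow> 'a \<Rightarrow> 'a \<Rightarrow> 'a \<Rightarrow> 'a" where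
  "cubic_pair_resultant p q \<alpha> \<beta> =
     \<beta>^3*p^2*q + \<beta>^3*p^3 + 8*\<alpha>*\<beta>^2*p*q^2 + 15*\<alpha>*\<beta>^2*p^2*q + 8*\<alpha>*\<beta>^2*p^3
   + 16*\<alpha>^2*\<beta>*q^3 + 12*\<alpha>^2*\<beta>*p*q^2 + 12*\<alpha>^2*\<beta>*p^2*q + 16*\<alpha>^2*\<beta>*p^3 + 27*\<alpha>^3*p*q^2"

lemma cubic_pair_resultant_via_roots:
  fixes p r1 r2 r3 \<alpha> \<beta> :: "'a::field"
  assumes "r1 + r2 + r3 = -2" and "r1*r2 + r1*r3 + r2*r3 = -2*(r1*r2*r3)"
  defines "g \<equiv> \<lambda>t. \<alpha>*(2*t+1)*(t+2)^2 + \<beta>*(t+1)"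
  shows "p^3 * (g r1 * g r2 * g r3) = - cubic_pair_resultant p (p*(r1*r2*r3)) \<alpha> \<beta>"
proof -
  have r3: "r3 = -2 - r1 - r2" using assms(1) by (simp add: algebra_simps)
  show ?thesis using assms(2) unfolding g_def cubic_pair_resultant_def r3 by Groebner_Basis.algebra
qed

lemma common_root_iff_cubic_pair_resultant:
  fixes p q \<alpha> \<beta> :: "'a::alg_closed_field"
  assumes "p \<noteq> 0"
  shows "(\<exists>t. p*t^3 + 2*p*t^2 - 2*q*t - q = 0 \<and> \<alpha>*(2*t+1)*(t+2)^2 + \<beta>*(t+1) = 0)
    \<longleftrightarrow> cubic_pair_resultant p q \<alpha> \<beta> = 0"
proof -
  define g where "g t = \<alpha>*(2*t+1)*(t+2)^2 + \<beta>*(t+1)" for t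
  obtain r1 r2 r3 where e1: "r1 + r2 + r3 = -2"
    and e2: "r1*r2 + r1*r3 + r2*r3 = -2*q/p" and e3: "r1*r2*r3 = -(-q/p)"
    by (rule alg_closed_cubic_vieta)
  have s: "r1*r2 + r1*r3 + r2*r3 = -2*(r1*r2*r3)" using e2 e3 by simp
  have q: "q = p*(r1*r2*r3)" using e3 assms by simp
  have factor: "p*t^3 + 2*p*t^2 - 2*q*t - q = p*(t-r1)*(t-r2)*(t-r3)" for t
    using e1 s unfolding q by Groebner_Basis.algebra
  have "p^3 * (g r1 * g r2 * g r3) = - cubic_pair_resultant p q \<alpha> \<beta>"
    unfolding g_def cubic_pair_resultant_via_roots[OF e1 s] q ..
  then have "g r1 * g r2 * g r3 = 0 \<longleftrightarrow> cubic_pair_resultant p q \<alpha> \<beta> = 0"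
    using assms by auto
  moreover have "(\<exists>t. p*t^3 + 2*p*t^2 - 2*q*t - q = 0 \<and> g t = 0) \<longleftrightarrow> g r1 * g r2 * g r3 = 0"
    unfolding factor using assms by auto
  ultimately show ?thesis by (simp add: g_def)
qed

lemma torus_solution_iff_c2_eq_0:
  fixes c :: "nat \<Rightarrow> 'a::field_char_0"
  assumes c: "c 1 \<noteq> 0" "c 4 \<noteq> 0" "c 5 \<noteq> 0" "c 6 \<noteq> 0" "c 7 \<noteq> 0" and c2: "c 2 = 0"
  shows "(\<exists>A B y z. torus_solution c A B y z) \<longleftrightarrow> 27 * c 1 * c 5^2 * c 7^2 + 16 * c 3^3 * c 4 * c 6 = 0"
proof
  assume "\<exists>A B y z. torus_solution c A B y z"
  then obtain A B y z where A: "A \<noteq> 0" and l2: "0 = -(2*A + B)" and l3: "c 3 * z = -(A + 2*B)"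
    and r1: "c 5 * c 7 * A^2 * z = c 4 * c 6 * B^2 * y" and r2: "c 1 * c 5 * c 7 * y * z^2 = (A + B) * B^2"
    using c2 by (auto simp: torus_solution_def)
  have "A^5 * (27 * c 1 * c 5^2 * c 7^2 + 16 * c 3^3 * c 4 * c 6) = 0"
    using l2 l3 r1 r2 by Groebner_Basis.algebra
  with A show "27 * c 1 * c 5^2 * c 7^2 + 16 * c 3^3 * c 4 * c 6 = 0" by simp
next
  assume key: "27 * c 1 * c 5^2 * c 7^2 + 16 * c 3^3 * c 4 * c 6 = 0"
  then have c3: "c 3 \<noteq> 0" using c by auto
  have "torus_solution c 1 (-2) (3 * c 5 * c 7 / (4 * c 3 * c 4 * c 6)) (3 / c 3)"
    unfolding torus_solution_def
  proof (intro conjI)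
    have "16 * c 3^3 * c 4 * c 6 = - (27 * c 1 * c 5^2 * c 7^2)"
      using key by (simp add: eq_neg_iff_add_eq_0 add.commute)
    then show "c 1 * c 5 * c 7 * (3 * c 5 * c 7 / (4 * c 3 * c 4 * c 6)) * (3 / c 3)^2 = (1 + -2) * (-2)^2"
      using c c3 by (simp add: field_simps power2_eq_square eval_nat_numeral)
  qed (use c c2 c3 in \<open>simp_all add: field_simps\<close>)
  then show "\<exists>A B y z. torus_solution c A B y z" by blast
qed

lemma torus_solution_iff_c3_eq_0:
  fixes c :: "nat \<Rightarrow> 'a::field_char_0"
  assumes c: "c 1 \<noteq> 0" "c 4 \<noteq> 0" "c 5 \<noteq> 0" "c 6 \<noteq> 0" "c 7 \<noteq> 0" and c3: "c 3 = 0"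
  shows "(\<exists>A B y z. torus_solution c A B y z) \<longleftrightarrow> 27 * c 1 * c 4^2 * c 6^2 + 16 * c 2^3 * c 5 * c 7 = 0"
proof
  assume "\<exists>A B y z. torus_solution c A B y z"
  then obtain A B y z where B: "B \<noteq> 0" and l2: "c 2 * y = -(2*A + B)" and l3: "0 = -(A + 2*B)"
    and r1: "c 5 * c 7 * A^2 * z = c 4 * c 6 * B^2 * y" and r2: "c 1 * c 5 * c 7 * y * z^2 = (A + B) * B^2"
    using c3 by (auto simp: torus_solution_def)
  have "B^7 * (27 * c 1 * c 4^2 * c 6^2 + 16 * c 2^3 * c 5 * c 7) = 0"
    using l2 l3 r1 r2 by Groebner_Basis.algebra
  with B show "27 * c 1 * c 4^2 * c 6^2 + 16 * c 2^3 * c 5 * c 7 = 0" by simp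
next
  assume key: "27 * c 1 * c 4^2 * c 6^2 + 16 * c 2^3 * c 5 * c 7 = 0"
  then have c2: "c 2 \<noteq> 0" using c by auto
  have "torus_solution c (-2) 1 (3 / c 2) (3 * c 4 * c 6 / (4 * c 2 * c 5 * c 7))"
    unfolding torus_solution_def
  proof (intro conjI)
    have "16 * c 2^3 * c 5 * c 7 = - (27 * c 1 * c 4^2 * c 6^2)"
      using key by (simp add: eq_neg_iff_add_eq_0 add.commute)
    then show "c 1 * c 5 * c 7 * (3 / c 2) * (3 * c 4 * c 6 / (4 * c 2 * c 5 * c 7))^2 = (-2 + 1) * 1^2"
      using c c2 by (simp add: field_simps power2_eq_square eval_nat_numeral)
  qed (use c c2 c3 in \<open>simp_all add: field_simps\<close>)
  then show "\<exists>A B y z. torus_solution c A B y z" by blast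
qed

lemma torus_solution_of_ratio:
  fixes c :: "nat \<Rightarrow> 'a::field"
  assumes c2: "c 2 \<noteq> 0" and c3: "c 3 \<noteq> 0"
    and t: "t \<noteq> 0" "2*t + 1 \<noteq> 0" "t + 2 \<noteq> 0"
    and f: "c 2 * c 5 * c 7 * t^2 * (t + 2) = c 3 * c 4 * c 6 * (2*t + 1)"
    and g: "c 1 * c 5 * c 7 * (2*t + 1) * (t + 2)^2 = - (c 2 * c 3^2 * (t + 1))"
  shows "torus_solution c (-t) (-1) ((2*t + 1) / c 2) ((t + 2) / c 3)"
proof -
  have r1: "c 5 * c 7 * (-t)^2 * ((t + 2) / c 3) = c 4 * c 6 * (-1)^2 * ((2*t + 1) / c 2)"
    using f c2 c3 by (simp add: field_simps)
  have "c 1 * c 5 * c 7 * ((2*t + 1) / c 2) * ((t + 2) / c 3)^2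
      = c 1 * c 5 * c 7 * (2*t + 1) * (t + 2)^2 / (c 2 * c 3^2)"
    by (simp add: power_divide)
  also have "\<dots> = (-t + -1) * (-1)^2"
    unfolding g using c2 c3 by simp
  finally show ?thesis
    using r1 c2 c3 t by (simp add: torus_solution_def)
qed

lemma torus_solution_iff_common_root:
  fixes c :: "nat \<Rightarrow> 'a::field_char_0"
  assumes c: "c 2 \<noteq> 0" "c 3 \<noteq> 0" "c 4 \<noteq> 0" "c 5 \<noteq> 0" "c 6 \<noteq> 0" "c 7 \<noteq> 0"
  defines "p \<equiv> c 2 * c 5 * c 7" and "q \<equiv> c 3 * c 4 * c 6"
    and "\<alpha> \<equiv> c 1 * c 5 * c 7" and "\<beta> \<equiv> c 2 * c 3^2"
  shows "(\<exists>A B y z. torus_solution c A B y z) \<longleftrightarrow>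
    (\<exists>t. p*t^3 + 2*p*t^2 - 2*q*t - q = 0 \<and> \<alpha>*(2*t+1)*(t+2)^2 + \<beta>*(t+1) = 0)"
proof
  assume "\<exists>A B y z. torus_solution c A B y z"
  then obtain A B y z where B: "B \<noteq> 0" and l2: "c 2 * y = -(2*A + B)" and l3: "c 3 * z = -(A + 2*B)"
    and r1: "c 5 * c 7 * A^2 * z = c 4 * c 6 * B^2 * y" and r2: "c 1 * c 5 * c 7 * y * z^2 = (A + B) * B^2"
    by (auto simp: torus_solution_def)
  define t where "t = A / B"
  have A: "A = t * B" using B by (simp add: t_def)
  have "B^3 * (p*t^3 + 2*p*t^2 - 2*q*t - q) = 0"
    using l2 l3 r1 unfolding p_def q_def A by Groebner_Basis.algebra
  moreover have "B^3 * (\<alpha>*(2*t+1)*(t+2)^2 + \<beta>*(t+1)) = 0"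
    using l2 l3 r2 unfolding \<alpha>_def \<beta>_def A by Groebner_Basis.algebra
  ultimately show "\<exists>t. p*t^3 + 2*p*t^2 - 2*q*t - q = 0 \<and> \<alpha>*(2*t+1)*(t+2)^2 + \<beta>*(t+1) = 0"
    using B by auto
next
  assume "\<exists>t. p*t^3 + 2*p*t^2 - 2*q*t - q = 0 \<and> \<alpha>*(2*t+1)*(t+2)^2 + \<beta>*(t+1) = 0"
  then obtain t where f: "p*t^3 + 2*p*t^2 - 2*q*t - q = 0" and g: "\<alpha>*(2*t+1)*(t+2)^2 + \<beta>*(t+1) = 0"
    by blast
  have p: "p \<noteq> 0" and q: "q \<noteq> 0" using c by (simp_all add: p_def q_def)
  have "t \<noteq> 0" using f q by auto
  moreover have "2*t + 1 \<noteq> 0"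
  proof
    assume "2*t + 1 = 0"
    then have "3 * p = 0" using f by Groebner_Basis.algebra
    with p show False by simp
  qed
  moreover have "t + 2 \<noteq> 0"
  proof
    assume "t + 2 = 0"
    then have "3 * q = 0" using f by Groebner_Basis.algebra
    with q show False by simp
  qed
  moreover have "c 2 * c 5 * c 7 * t^2 * (t + 2) = c 3 * c 4 * c 6 * (2*t + 1)"
    using f unfolding p_def q_def by Groebner_Basis.algebra
  moreover have "c 1 * c 5 * c 7 * (2*t + 1) * (t + 2)^2 = - (c 2 * c 3^2 * (t + 1))"
    using g unfolding \<alpha>_def \<beta>_def by (simp add: eq_neg_iff_add_eq_0)
  ultimately show "\<exists>A B y z. torus_solution c A B y z"
    using torus_solution_of_ratio[OF c(1,2)] by blast
qed

lemma cubic_pair_resultant_Delta7: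
  fixes c :: "nat \<Rightarrow> 'a::idom"
  shows "cubic_pair_resultant (c 2 * c 5 * c 7) (c 3 * c 4 * c 6) (c 1 * c 5 * c 7) (c 2 * c 3^2)
    = c 2 * c 3^2 * c 5^2 * c 7^2 * Delta7 c"
  unfolding cubic_pair_resultant_def Delta7_def by Groebner_Basis.algebra

lemma torus_solution_iff_Delta7_eq_0:
  fixes c :: "nat \<Rightarrow> 'a::{alg_closed_field,field_char_0}"
  assumes c: "c 1 \<noteq> 0" "c 4 \<noteq> 0" "c 5 \<noteq> 0" "c 6 \<noteq> 0" "c 7 \<noteq> 0"
  shows "(\<exists>A B y z. torus_solution c A B y z) \<longleftrightarrow> Delta7 c = 0"
proof (cases "c 2 = 0")
  case True
  have "Delta7 c = c 1^2 * c 4^2 * c 6^2 * (27 * c 1 * c 5^2 * c 7^2 + 16 * c 3^3 * c 4 * c 6)"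
    using True unfolding Delta7_def by Groebner_Basis.algebra
  with torus_solution_iff_c2_eq_0[OF c True] c show ?thesis by simp
next
  case c2: False
  show ?thesis
  proof (cases "c 3 = 0")
    case True
    have "Delta7 c = c 1^2 * c 5^2 * c 7^2 * (27 * c 1 * c 4^2 * c 6^2 + 16 * c 2^3 * c 5 * c 7)"
      using True unfolding Delta7_def by Groebner_Basis.algebra
    with torus_solution_iff_c3_eq_0[OF c True] c show ?thesis by simp
  next
    case c3: False
    have "c 2 * c 5 * c 7 \<noteq> 0" using c c2 by simp
    then have "(\<exists>A B y z. torus_solution c A B y z) \<longleftrightarrow>
        cubic_pair_resultant (c 2 * c 5 * c 7) (c 3 * c 4 * c 6) (c 1 * c 5 * c 7) (c 2 * c 3^2) = 0"
      unfolding torus_solution_iff_common_root[OF c2 c3 c(2-5)]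
      by (rule common_root_iff_cubic_pair_resultant)
    also have "\<dots> \<longleftrightarrow> Delta7 c = 0"
      unfolding cubic_pair_resultant_Delta7 using c c2 c3 by simp
    finally show ?thesis .
  qed
qed

lemma singular_point_exists_iff_D7_eq_0:
  fixes c :: "nat \<Rightarrow> 'a::{alg_closed_field,field_char_0}"
  shows "(\<exists>x. singular_point c x) \<longleftrightarrow> D7 c = 0"
proof (cases "c 1 * c 4 * c 5 * c 6 * c 7 = 0")
  case True
  then show ?thesis using coordinate_singular_point by (auto simp: D7_def)
next
  case False
  then have c: "c 1 \<noteq> 0" "c 4 \<noteq> 0" "c 5 \<noteq> 0" "c 6 \<noteq> 0" "c 7 \<noteq> 0" by auto
  have "(\<exists>x. singular_point c x) \<longleftrightarrow> (\<exists>A B y z. torus_solution c A B y z)"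
    using singular_point_imp_torus_solution[OF c] torus_solution_imp_singular_point[OF c(1-3,5)]
    by blast
  also have "\<dots> \<longleftrightarrow> Delta7 c = 0" by (rule torus_solution_iff_Delta7_eq_0[OF c])
  finally show ?thesis using False by (simp add: D7_def)
qed

theorem lemma1p1:
  fixes a :: "nat \<Rightarrow> 'k::field_char_0"
  assumes "\<exists>\<zeta>::'k. \<zeta> ^ 5 = 1 \<and> (\<forall>n::nat. 0 < n \<and> n < 5 \<longrightarrow> \<zeta> ^ n \<noteq> 1)"
  shows "smooth_cubic a \<longleftrightarrow> D7 a \<noteq> 0"
proof -
  have "smooth_cubic a \<longleftrightarrow> \<not> (\<exists>x. singular_point (\<lambda>j. to_ac (a j)) x)"
    unfolding smooth_cubic_def singular_point_def ..
  also have "\<dots> \<longleftrightarrow> D7 (\<lambda>j. to_ac (a j)) \<noteq> 0"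
    by (simp add: singular_point_exists_iff_D7_eq_0)
  also have "D7 (\<lambda>j. to_ac (a j)) = to_ac (D7 a)"
    by (simp add: D7_def Delta7_def)
  finally show ?thesis by simp
qed

end
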